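(* Let $X,Y$ be nonempty compact Hausdorff spaces, $E\neq\{0_E\}$ a complex locally convex space, and $T:C(X,E)\to C(Y,E)$ a map with $\operatorname{Ran}(TF-TG)\subset\operatorname{Ran}(F-G)$ for all $F,G\in C(X,E)$ and $T(1\otimes 0_E)=1\otimes 0_E$. Then $\tilde T_u=\tilde T_v$ for all $u,v\in E\setminus\{0_E\}$.
   Context: $C(X,E)$ is the vector space of continuous functions $X\to E$; $\operatorname{Ran}(F)=\{F(x):x\in X\}$; $f\otimes u$ denotes $x\mapsto f(x)u$, and $1\otimes 0_E$ is the constant function $0_E$. For $u\in E\setminus\{0_E\}$, $\tilde T_u:C(X)\to C(Y)$ is defined by: $\tilde T_u f$ is the unique function $Y\to\mathbb{C}$ with $T(f\otimes u)(y)=(\tilde T_uf)(y)u$ for all $y\in Y$ (it exists since $\operatorname{Ran}(T(f\otimes u))\subset\operatorname{Ran}(f)u$, and it is continuous). *)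

theory Defs
  imports "HOL-Analysis.Analysis"
begin

definition cseminorm :: "(complex \<Rightarrow> 'e::ab_group_add \<Rightarrow> 'e) \<Rightarrow> ('e \<Rightarrow> real) \<Rightarrow> bool" where
  "cseminorm sc p \<longleftrightarrow> (\<forall>x. 0 \<le> p x) \<and> (\<forall>c x. p (sc c x) = cmod c * p x)
     \<and> (\<forall>x y. p (x + y) \<le> p x + p y)"

definition lc_topology :: "('e::ab_group_add \<Rightarrow> real) set \<Rightarrow> 'e topology" where
  "lc_topology P = topology_generated_by {{y. p (y - x) < r} | p x r. p \<in> P \<and> r > 0}"

text \<open>A (Hausdorff) complex locally convex space: a complex vector space together with a
  separating family of seminorms, topologised by lc_topology.\<close>
definition locally_convex :: "(complex \<Rightarrow> 'e::ab_group_add \<Rightarrow> 'e) \<Rightarrow> ('e \<Rightarrow> real) set \<Rightarrow> bool" where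
  "locally_convex sc P \<longleftrightarrow> Vector_Spaces.vector_space sc
     \<and> (\<forall>p\<in>P. cseminorm sc p) \<and> (\<forall>x. x \<noteq> 0 \<longrightarrow> (\<exists>p\<in>P. p x \<noteq> 0))"

definition Ran :: "'a topology \<Rightarrow> ('a \<Rightarrow> 'e) \<Rightarrow> 'e set" where
  "Ran X F = F ` topspace X"

definition Ttilde :: "(complex \<Rightarrow> 'e \<Rightarrow> 'e) \<Rightarrow> (('a \<Rightarrow> 'e) \<Rightarrow> ('b \<Rightarrow> 'e)) \<Rightarrow> 'e
    \<Rightarrow> ('a \<Rightarrow> complex) \<Rightarrow> 'b \<Rightarrow> complex" where
  "Ttilde sc T u f = (\<lambda>y. THE c. T (\<lambda>x. sc (f x) u) y = sc c u)"

end

theory Submission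
  imports Defs
begin

text \<open>For \<open>w \<noteq> 0\<close> and \<open>y \<in> Y\<close>, the map \<open>\<phi> f = Ttilde w f y\<close> is a functional on \<open>C(X)\<close> with
  \<open>\<phi> 0 = 0\<close> and \<open>\<phi> f - \<phi> g \<in> Ran (f - g)\<close>. Such a functional commutes with adding constants, and testing
  it on combinations \<open>\<alpha> a + \<beta> b\<close> of real functions with \<open>\<alpha>, \<beta>\<close> independent over \<open>\<real>\<close> shows that it is
  complex homogeneous. Comparing \<open>T (f \<otimes> u)\<close> with \<open>T (f \<otimes> v)\<close> at \<open>y\<close> gives \<open>(a - c) u = (b - c) v\<close> for
  \<open>a = Ttilde u f y\<close>, \<open>b = Ttilde v f y\<close> and some value \<open>c\<close> of \<open>f\<close>. Either \<open>a = b = c\<close>, or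
  \<open>u = \<mu> v\<close>, and then homogeneity of \<open>Ttilde v\<close> gives \<open>T (f \<otimes> u) y = T ((\<mu> f) \<otimes> v) y = b u\<close>.\<close>

lemma cseminorm_zero:
  assumes "vector_space sc" and "cseminorm sc p"
  shows "p 0 = 0"
proof -
  interpret vector_space sc by (rule assms(1))
  have "p (sc 0 0) = cmod 0 * p 0" using assms(2) unfolding cseminorm_def by blast
  then show ?thesis by simp
qed

lemma cseminorm_abs_diff_le:
  assumes "vector_space sc" and "cseminorm sc p"
  shows "\<bar>p a - p b\<bar> \<le> p (a - b)"
proof -
  interpret vector_space sc by (rule assms(1))
  have triangle: "p (x + y) \<le> p x + p y" for x y
    using assms(2) unfolding cseminorm_def by blast
  have "p (sc (-1) (a - b)) = cmod (-1) * p (a - b)"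
    using assms(2) unfolding cseminorm_def by blast
  then have symm: "p (b - a) = p (a - b)" by (simp add: scale_minus_left)
  have "p a \<le> p (a - b) + p b" using triangle[of "a - b" b] by simp
  moreover have "p b \<le> p (b - a) + p a" using triangle[of "b - a" a] by simp
  ultimately show ?thesis using symm by linarith
qed

lemma cseminorm_scale_lipschitz:
  assumes "vector_space sc" and "cseminorm sc p"
  shows "(p u)-lipschitz_on UNIV (\<lambda>c. p (sc c u - z))"
proof (rule lipschitz_onI)
  interpret vector_space sc by (rule assms(1))
  show "0 \<le> p u" using assms(2) unfolding cseminorm_def by blast
  fix c d :: complex
  have "\<bar>p (sc c u - z) - p (sc d u - z)\<bar> \<le> p (sc c u - z - (sc d u - z))"
    by (rule cseminorm_abs_diff_le[OF assms])
  also have "\<dots> = p (sc (c - d) u)" by (simp add: scale_left_diff_distrib)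
  also have "\<dots> = p u * dist c d"
    using assms(2) unfolding cseminorm_def by (simp add: dist_norm)
  finally show "dist (p (sc c u - z)) (p (sc d u - z)) \<le> p u * dist c d"
    by (simp add: dist_real_def)
qed

lemma continuous_map_scale_lc_topology:
  assumes lc: "locally_convex sc P" and "P \<noteq> {}"
    and f: "continuous_map X euclidean (f :: 'a \<Rightarrow> complex)"
  shows "continuous_map X (lc_topology P) (\<lambda>x. sc (f x) u)"
  unfolding lc_topology_def
proof (rule continuous_on_generated_topo)
  have vs: "vector_space sc" and sn: "\<And>p. p \<in> P \<Longrightarrow> cseminorm sc p"
    using lc unfolding locally_convex_def by auto
  fix U assume "U \<in> {{y. p (y - z) < r} | p z r. p \<in> P \<and> r > 0}"
  then obtain p z r where U: "U = {y. p (y - z) < r}" and "p \<in> P" by blast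
  have "continuous_on UNIV (\<lambda>c. p (sc c u - z))"
    using cseminorm_scale_lipschitz[OF vs sn[OF \<open>p \<in> P\<close>]] by (rule lipschitz_on_continuous_on)
  then have "continuous_map X euclidean (\<lambda>x. p (sc (f x) u - z))"
    using continuous_map_compose[OF f, of euclidean "\<lambda>c. p (sc c u - z)"] by (simp add: o_def)
  then have "openin X {x \<in> topspace X. p (sc (f x) u - z) \<in> {..<r}}"
    by (rule openin_continuous_map_preimage) simp
  moreover have "(\<lambda>x. sc (f x) u) -` U \<inter> topspace X = {x \<in> topspace X. p (sc (f x) u - z) \<in> {..<r}}"
    by (auto simp: U)
  ultimately show "openin X ((\<lambda>x. sc (f x) u) -` U \<inter> topspace X)" by simp
next
  obtain p where "p \<in> P" using \<open>P \<noteq> {}\<close> by auto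
  have "p 0 = 0" using lc \<open>p \<in> P\<close> unfolding locally_convex_def by (blast intro: cseminorm_zero)
  then have "y \<in> {y'. p (y' - y) < 1}" for y by simp
  moreover have "{y'. p (y' - y) < 1} \<in> {{y. p (y - z) < r} | p z r. p \<in> P \<and> r > 0}" for y
    by (rule CollectI, rule exI[of _ p], rule exI[of _ y], rule exI[of _ 1]) (simp add: \<open>p \<in> P\<close>)
  ultimately have "y \<in> \<Union> {{y. p (y - z) < r} | p z r. p \<in> P \<and> r > 0}" for y
    by (rule UnionI[rotated])
  then show "(\<lambda>x. sc (f x) u) ` topspace X \<subseteq> \<Union> {{y. p (y - z) < r} | p z r. p \<in> P \<and> r > 0}"
    by (intro subsetI)
qed

section \<open>Functionals whose differences lie in the range of the difference\<close>

lemma continuous_map_mult [continuous_intros]: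
  fixes f g :: "'a \<Rightarrow> 'b::real_normed_algebra"
  shows "continuous_map X euclidean f \<Longrightarrow> continuous_map X euclidean g
    \<Longrightarrow> continuous_map X euclidean (\<lambda>x. f x * g x)"
  by (simp add: continuous_map_atin tendsto_mult)

lemma continuous_map_of_real [continuous_intros]:
  "continuous_map X euclidean f \<Longrightarrow> continuous_map X euclidean (\<lambda>x. of_real (f x) :: 'b::real_normed_algebra_1)"
  by (simp add: continuous_map_atin tendsto_of_real)

lemma continuous_map_Re [continuous_intros]:
  "continuous_map X euclidean f \<Longrightarrow> continuous_map X euclidean (\<lambda>x. Re (f x))"
  by (simp add: continuous_map_atin tendsto_Re)

lemma continuous_map_Im [continuous_intros]:
  "continuous_map X euclidean f \<Longrightarrow> continuous_map X euclidean (\<lambda>x. Im (f x))"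
  by (simp add: continuous_map_atin tendsto_Im)

text \<open>The condition \<open>Im (\<alpha> * cnj \<beta>) \<noteq> 0\<close> says that \<open>\<alpha>\<close> and \<open>\<beta>\<close> are linearly independent over \<open>\<real>\<close>.\<close>

lemma independent_real_combination_eq_0:
  fixes \<alpha> \<beta> :: complex and s t :: real
  assumes "Im (\<alpha> * cnj \<beta>) \<noteq> 0" and "\<alpha> * s + \<beta> * t = 0"
  shows "s = 0"
proof -
  have re: "Re \<alpha> * s + Re \<beta> * t = 0" and im: "Im \<alpha> * s + Im \<beta> * t = 0"
    using arg_cong[OF assms(2), of Re] arg_cong[OF assms(2), of Im] by simp_all
  have "s * Im (\<alpha> * cnj \<beta>) = Re \<beta> * (Im \<alpha> * s + Im \<beta> * t) - Im \<beta> * (Re \<alpha> * s + Re \<beta> * t)"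
    by (simp add: algebra_simps)
  also have "\<dots> = 0" using re im by simp
  finally show ?thesis using assms(1) by simp
qed

locale range_decreasing_functional =
  fixes X :: "'a topology" and \<phi> :: "('a \<Rightarrow> complex) \<Rightarrow> complex"
  assumes diff_in_range: "\<And>f g. continuous_map X euclidean f \<Longrightarrow> continuous_map X euclidean g
      \<Longrightarrow> \<exists>x\<in>topspace X. \<phi> f - \<phi> g = f x - g x"
    and zero: "\<phi> (\<lambda>x. 0) = 0"
begin

lemma value_in_range:
  assumes "continuous_map X euclidean f"
  shows "\<exists>x\<in>topspace X. \<phi> f = f x"
  using diff_in_range[OF assms, of "\<lambda>x. 0"] by (simp add: zero)

lemma add_const:
  assumes f: "continuous_map X euclidean f"
  shows "\<phi> (\<lambda>x. f x + c) = \<phi> f + c"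
proof -
  have "continuous_map X euclidean (\<lambda>x. f x + c)" by (intro continuous_intros f)
  from diff_in_range[OF this f] show ?thesis by (auto simp: algebra_simps)
qed

lemma vanishes_on_summand:
  fixes a b :: "'a \<Rightarrow> real" and \<alpha> \<beta> :: complex
  assumes a: "continuous_map X euclidean a" and b: "continuous_map X euclidean b"
    and indep: "Im (\<alpha> * cnj \<beta>) \<noteq> 0"
    and sum: "\<phi> (\<lambda>x. \<alpha> * a x + \<beta> * b x) = 0"
  shows "\<phi> (\<lambda>x. \<alpha> * a x) = 0"
proof -
  have ca: "continuous_map X euclidean (\<lambda>x. \<alpha> * a x)" by (intro continuous_intros a)
  have cab: "continuous_map X euclidean (\<lambda>x. \<alpha> * a x + \<beta> * b x)" by (intro continuous_intros a b)
  obtain x1 where x1: "\<phi> (\<lambda>x. \<alpha> * a x) = \<alpha> * a x1" using value_in_range[OF ca] by auto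
  obtain x2 where "\<phi> (\<lambda>x. \<alpha> * a x) - \<phi> (\<lambda>x. \<alpha> * a x + \<beta> * b x) = - (\<beta> * b x2)"
    using diff_in_range[OF ca cab] by auto
  with x1 sum have "\<alpha> * a x1 + \<beta> * b x2 = 0" by (simp add: algebra_simps)
  then have "a x1 = 0" by (rule independent_real_combination_eq_0[OF indep])
  with x1 show ?thesis by simp
qed

lemma vanishes_on_sum:
  fixes a b :: "'a \<Rightarrow> real" and \<alpha> \<beta> :: complex
  assumes a: "continuous_map X euclidean a" and b: "continuous_map X euclidean b"
    and indep: "Im (\<alpha> * cnj \<beta>) \<noteq> 0"
    and za: "\<phi> (\<lambda>x. \<alpha> * a x) = 0" and zb: "\<phi> (\<lambda>x. \<beta> * b x) = 0"
  shows "\<phi> (\<lambda>x. \<alpha> * a x + \<beta> * b x) = 0"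
proof -
  have ca: "continuous_map X euclidean (\<lambda>x. \<alpha> * a x)" by (intro continuous_intros a)
  have cb: "continuous_map X euclidean (\<lambda>x. \<beta> * b x)" by (intro continuous_intros b)
  have cab: "continuous_map X euclidean (\<lambda>x. \<alpha> * a x + \<beta> * b x)" by (intro continuous_intros a b)
  obtain x1 where x1: "\<phi> (\<lambda>x. \<alpha> * a x + \<beta> * b x) = \<beta> * b x1"
    using diff_in_range[OF cab ca] za by auto
  obtain x2 where x2: "\<phi> (\<lambda>x. \<alpha> * a x + \<beta> * b x) = \<alpha> * a x2"
    using diff_in_range[OF cab cb] zb by auto
  from x1 x2 have "\<alpha> * a x2 + \<beta> * of_real (- b x1) = 0" by simp
  then have "a x2 = 0" by (rule independent_real_combination_eq_0[OF indep])
  with x2 show ?thesis by simp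
qed

text \<open>A real multiple \<open>l\<close> of \<open>\<zeta>\<close> is reached by splitting \<open>l = \<i> l + (1 - \<i>) l\<close>
  into two summands that are not real multiples of \<open>\<zeta>\<close>.\<close>

lemma vanishes_on_rescaled:
  fixes w :: "'a \<Rightarrow> real" and \<zeta> l :: complex
  assumes w: "continuous_map X euclidean w" and "\<zeta> \<noteq> 0"
    and z: "\<phi> (\<lambda>x. \<zeta> * w x) = 0"
  shows "\<phi> (\<lambda>x. l * w x) = 0"
proof -
  have oblique: "\<phi> (\<lambda>x. \<gamma> * w x) = 0" if "Im (\<gamma> * cnj \<zeta>) \<noteq> 0" for \<gamma>
  proof -
    have "Im (\<gamma> * cnj (\<zeta> - \<gamma>)) = Im (\<gamma> * cnj \<zeta>)" by (simp add: algebra_simps)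
    then have indep: "Im (\<gamma> * cnj (\<zeta> - \<gamma>)) \<noteq> 0" using that by simp
    have "(\<lambda>x. \<gamma> * w x + (\<zeta> - \<gamma>) * w x) = (\<lambda>x. \<zeta> * w x)" by (simp add: algebra_simps)
    then show ?thesis using vanishes_on_summand[OF w w indep] z by simp
  qed
  consider "l = 0" | "Im (l * cnj \<zeta>) \<noteq> 0" | "l \<noteq> 0" "Im (l * cnj \<zeta>) = 0" by blast
  then show ?thesis
  proof cases
    case 1
    then show ?thesis using zero by simp
  next
    case 2
    then show ?thesis by (rule oblique)
  next
    case 3
    define r where "r = Re (l * cnj \<zeta>)"
    have r: "l * cnj \<zeta> = of_real r" using 3 by (simp add: r_def complex_eq_iff)
    moreover have "l * cnj \<zeta> \<noteq> 0" using 3 \<open>\<zeta> \<noteq> 0\<close> by simp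
    ultimately have "r \<noteq> 0" by simp
    then have "Im (\<i> * l * cnj \<zeta>) \<noteq> 0" and "Im ((1 - \<i>) * l * cnj \<zeta>) \<noteq> 0"
      using r by (simp_all add: mult.assoc)
    then have "\<phi> (\<lambda>x. (\<i> * l) * w x) = 0" and "\<phi> (\<lambda>x. ((1 - \<i>) * l) * w x) = 0"
      using oblique by blast+
    moreover have "Im ((\<i> * l) * cnj ((1 - \<i>) * l)) \<noteq> 0"
    proof -
      have "(\<i> * l) * cnj ((1 - \<i>) * l) = (\<i> - 1) * (l * cnj l)" by (simp add: algebra_simps)
      also have "l * cnj l = (of_real (cmod l))\<^sup>2" using complex_norm_square[of l] by simp
      finally show ?thesis using \<open>l \<noteq> 0\<close> by simp
    qed
    ultimately have "\<phi> (\<lambda>x. (\<i> * l) * w x + ((1 - \<i>) * l) * w x) = 0"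
      using vanishes_on_sum[OF w w] by blast
    moreover have "(\<lambda>x. (\<i> * l) * w x + ((1 - \<i>) * l) * w x) = (\<lambda>x. l * w x)"
      by (simp add: algebra_simps)
    ultimately show ?thesis by simp
  qed
qed

lemma vanishes_on_multiple:
  assumes f: "continuous_map X euclidean f" and "\<phi> f = 0"
  shows "\<phi> (\<lambda>x. l * f x) = 0"
proof (cases "l = 0")
  case True
  then show ?thesis using zero by simp
next
  case False
  define u v where "u x = Re (f x)" and "v x = Im (f x)" for x
  have u: "continuous_map X euclidean u" and v: "continuous_map X euclidean v"
    unfolding u_def v_def by (intro continuous_intros f)+
  have "(\<lambda>x. (1::complex) * u x + \<i> * v x) = f" and "(\<lambda>x. \<i> * v x + (1::complex) * u x) = f"
    by (auto simp: u_def v_def complex_eq_iff)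
  then have zu: "\<phi> (\<lambda>x. (1::complex) * u x) = 0" and zv: "\<phi> (\<lambda>x. \<i> * v x) = 0"
    using vanishes_on_summand[OF u v, of 1 \<i>] vanishes_on_summand[OF v u, of \<i> 1] \<open>\<phi> f = 0\<close>
    by simp_all
  have "\<phi> (\<lambda>x. l * u x) = 0" using vanishes_on_rescaled[OF u _ zu] by simp
  moreover have "\<phi> (\<lambda>x. (l * \<i>) * v x) = 0" using vanishes_on_rescaled[OF v _ zv] by simp
  moreover have "Im (l * cnj (l * \<i>)) \<noteq> 0"
  proof -
    have "Im (l * cnj (l * \<i>)) = - ((Re l)\<^sup>2 + (Im l)\<^sup>2)" by (simp add: power2_eq_square)
    then show ?thesis using \<open>l \<noteq> 0\<close> complex_neq_0 by auto
  qed
  ultimately have "\<phi> (\<lambda>x. l * u x + (l * \<i>) * v x) = 0" by (intro vanishes_on_sum u v)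
  moreover have "(\<lambda>x. l * u x + (l * \<i>) * v x) = (\<lambda>x. l * f x)"
    by (auto simp: u_def v_def complex_eq_iff algebra_simps)
  ultimately show ?thesis by simp
qed

lemma mult_left:
  assumes f: "continuous_map X euclidean f"
  shows "\<phi> (\<lambda>x. l * f x) = l * \<phi> f"
proof -
  have g: "continuous_map X euclidean (\<lambda>x. f x + - \<phi> f)" by (intro continuous_intros f)
  have "\<phi> (\<lambda>x. f x + - \<phi> f) = 0" using add_const[OF f, of "- \<phi> f"] by simp
  then have "\<phi> (\<lambda>x. l * (f x + - \<phi> f)) = 0" by (rule vanishes_on_multiple[OF g])
  moreover have "\<phi> (\<lambda>x. l * (f x + - \<phi> f)) = \<phi> (\<lambda>x. l * f x) + - (l * \<phi> f)"
    using add_const[of "\<lambda>x. l * f x" "- (l * \<phi> f)"] f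
    by (simp add: continuous_intros algebra_simps)
  ultimately show ?thesis by simp
qed

end

section \<open>The induced scalar maps of a range-decreasing map\<close>

locale range_decreasing_map =
  fixes X :: "'a topology" and Y :: "'b topology"
    and sc :: "complex \<Rightarrow> 'e::ab_group_add \<Rightarrow> 'e" and P :: "('e \<Rightarrow> real) set"
    and T :: "('a \<Rightarrow> 'e) \<Rightarrow> ('b \<Rightarrow> 'e)"
  assumes locally_convex: "locally_convex sc P" and seminorms_nonempty: "P \<noteq> {}"
    and range_diff: "\<And>F G. continuous_map X (lc_topology P) F \<Longrightarrow> continuous_map X (lc_topology P) G
      \<Longrightarrow> Ran Y (\<lambda>y. T F y - T G y) \<subseteq> Ran X (\<lambda>x. F x - G x)"
    and map_zero: "\<forall>y\<in>topspace Y. T (\<lambda>x. 0) y = 0"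
begin

sublocale vector_space sc
  using locally_convex unfolding locally_convex_def by blast

lemma continuous_map_scale:
  "continuous_map X euclidean g \<Longrightarrow> continuous_map X (lc_topology P) (\<lambda>x. sc (g x) w)"
  by (rule continuous_map_scale_lc_topology[OF locally_convex seminorms_nonempty])

lemma diff_at_point:
  assumes "continuous_map X (lc_topology P) F" and "continuous_map X (lc_topology P) G"
    and "y \<in> topspace Y"
  shows "\<exists>x\<in>topspace X. T F y - T G y = F x - G x"
  using range_diff[OF assms(1,2)] assms(3) unfolding Ran_def by blast

lemma Ttilde_eqI:
  assumes "w \<noteq> 0" and "T (\<lambda>x. sc (g x) w) y = sc c w"
  shows "Ttilde sc T w g y = c"
  unfolding Ttilde_def using assms by auto

lemma T_scale_eq_Ttilde:
  assumes "w \<noteq> 0" and g: "continuous_map X euclidean g" and y: "y \<in> topspace Y"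
  shows "T (\<lambda>x. sc (g x) w) y = sc (Ttilde sc T w g y) w"
proof -
  have "continuous_map X (lc_topology P) (\<lambda>x. 0)"
    using continuous_map_scale[of "\<lambda>x. 0" 0] by simp
  then obtain x where "T (\<lambda>x. sc (g x) w) y - T (\<lambda>x. 0) y = sc (g x) w - 0"
    using diff_at_point[OF continuous_map_scale[OF g] _ y] by blast
  then have "T (\<lambda>x. sc (g x) w) y = sc (g x) w" using map_zero y by simp
  moreover from Ttilde_eqI[OF \<open>w \<noteq> 0\<close> this] have "Ttilde sc T w g y = g x" .
  ultimately show ?thesis by simp
qed

lemma range_decreasing_functional_Ttilde:
  assumes "w \<noteq> 0" and y: "y \<in> topspace Y"
  shows "range_decreasing_functional X (\<lambda>g. Ttilde sc T w g y)"
proof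
  fix f g :: "'a \<Rightarrow> complex"
  assume f: "continuous_map X euclidean f" and g: "continuous_map X euclidean g"
  obtain x where x: "x \<in> topspace X"
    and "T (\<lambda>x. sc (f x) w) y - T (\<lambda>x. sc (g x) w) y = sc (f x) w - sc (g x) w"
    using diff_at_point[OF continuous_map_scale[OF f] continuous_map_scale[OF g] y] by blast
  then have "sc (Ttilde sc T w f y - Ttilde sc T w g y) w = sc (f x - g x) w"
    using T_scale_eq_Ttilde[OF \<open>w \<noteq> 0\<close> _ y] f g by (simp add: scale_left_diff_distrib)
  then show "\<exists>x\<in>topspace X. Ttilde sc T w f y - Ttilde sc T w g y = f x - g x"
    using x \<open>w \<noteq> 0\<close> by auto
next
  show "Ttilde sc T w (\<lambda>x. 0) y = 0"
    using Ttilde_eqI[OF \<open>w \<noteq> 0\<close>] map_zero y by simp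
qed

lemma Ttilde_independent:
  assumes "u \<noteq> 0" "v \<noteq> 0" and f: "continuous_map X euclidean f" and y: "y \<in> topspace Y"
  shows "Ttilde sc T u f y = Ttilde sc T v f y"
proof -
  define a b where "a = Ttilde sc T u f y" and "b = Ttilde sc T v f y"
  have Ta: "T (\<lambda>x. sc (f x) u) y = sc a u" and Tb: "T (\<lambda>x. sc (f x) v) y = sc b v"
    using T_scale_eq_Ttilde[OF _ f y] assms(1,2) by (simp_all add: a_def b_def)
  obtain x where "sc a u - sc b v = sc (f x) u - sc (f x) v"
    using diff_at_point[OF continuous_map_scale[OF f, of u] continuous_map_scale[OF f, of v] y] Ta Tb
    by auto
  then have eq: "sc (a - f x) u = sc (b - f x) v"
    by (simp add: scale_left_diff_distrib algebra_simps)
  show ?thesis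
  proof (cases "a = f x")
    case True
    with eq \<open>v \<noteq> 0\<close> show ?thesis by (simp add: a_def b_def)
  next
    case False
    define \<mu> where "\<mu> = (b - f x) / (a - f x)"
    have u: "u = sc \<mu> v"
    proof -
      have "u = sc (inverse (a - f x)) (sc (a - f x) u)" using False by simp
      also have "\<dots> = sc \<mu> v" using eq by (simp add: \<mu>_def divide_inverse mult.commute)
      finally show ?thesis .
    qed
    interpret range_decreasing_functional X "\<lambda>g. Ttilde sc T v g y"
      by (rule range_decreasing_functional_Ttilde[OF \<open>v \<noteq> 0\<close> y])
    have "T (\<lambda>x. sc (f x) u) y = T (\<lambda>x. sc (\<mu> * f x) v) y" by (simp add: u mult.commute)
    also have "\<dots> = sc (\<mu> * b) v"
      using T_scale_eq_Ttilde[OF \<open>v \<noteq> 0\<close> _ y] mult_left[OF f] f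
      by (simp add: b_def continuous_intros)
    also have "\<dots> = sc b u" by (simp add: u mult.commute)
    finally show ?thesis using Ttilde_eqI[OF \<open>u \<noteq> 0\<close>] by (simp add: b_def)
  qed
qed

end

theorem lemma4p5:
  fixes X :: "'a topology" and Y :: "'b topology"
    and sc :: "complex \<Rightarrow> 'e::ab_group_add \<Rightarrow> 'e" and P :: "('e \<Rightarrow> real) set"
    and T :: "('a \<Rightarrow> 'e) \<Rightarrow> ('b \<Rightarrow> 'e)"
  assumes "compact_space X" "Hausdorff_space X" "topspace X \<noteq> {}"
    and "compact_space Y" "Hausdorff_space Y" "topspace Y \<noteq> {}"
    and "locally_convex sc P" and "\<exists>e::'e. e \<noteq> 0"
    and "\<And>F. continuous_map X (lc_topology P) F \<Longrightarrow> continuous_map Y (lc_topology P) (T F)"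
    and "\<And>F G. continuous_map X (lc_topology P) F \<Longrightarrow> continuous_map X (lc_topology P) G
           \<Longrightarrow> Ran Y (\<lambda>y. T F y - T G y) \<subseteq> Ran X (\<lambda>x. F x - G x)"
    and "\<forall>y\<in>topspace Y. T (\<lambda>x. 0) y = 0"
    and "u \<noteq> 0" and "v \<noteq> 0"
  shows "\<forall>f. continuous_map X euclidean f \<longrightarrow>
           (\<forall>y\<in>topspace Y. Ttilde sc T u f y = Ttilde sc T v f y)"
proof -
  have "P \<noteq> {}" using assms(7,8) unfolding locally_convex_def by blast
  then interpret range_decreasing_map X Y sc P T
    using assms(7,10,11) by unfold_locales
  show ?thesis using Ttilde_independent[OF assms(12,13)] by blast
qed

end
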